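(* Let $Y\in\mathbb{R}$ be a random response and $\mathbf{X}\in\mathbb{R}^p$ a random predictor with mean $\bm{\mu}$ and positive definite covariance matrix $\bm{\Sigma}$, and suppose $$Y=f(\bm{\beta}_1^\top\mathbf{X},\dots,\bm{\beta}_K^\top\mathbf{X},\varepsilon),$$ where $f$ is an unknown function, $\mathbf{B}=[\bm{\beta}_1,\dots,\bm{\beta}_K]\in\mathbb{R}^{p\times K}$ has full column rank $K$, and $\varepsilon$ is an error independent of $\mathbf{X}$ with $E(\varepsilon)=0$. Let $\mathcal{S_B}=\mathrm{span}(\bm{\beta}_1,\dots,\bm{\beta}_K)$. Suppose that (i) (Linear Design Condition) for every $\bm{b}\in\mathbb{R}^p$ there are constants $a_0,a_1,\dots,a_K$ with $E(\bm{b}^\top\mathbf{X}\mid \bm{\beta}_1^\top\mathbf{X},\dots,\bm{\beta}_K^\top\mathbf{X})=a_0+\sum_{i=1}^K a_i\bm{\beta}_i^\top\mathbf{X}$; and (ii) $\mathrm{Var}(\mathbf{X}\mid\mathbf{B}^\top\mathbf{X})$ is constant (non-random). Then for any subrange $S$ of the range of $Y$ (with $P(Y\in S)>0$ and $\mathrm{Var}(\mathbf{X}\mid Y\in S)$ nonsingular), $$\left[\mathrm{Var}(\mathbf{X}\mid Y\in S)\right]^{-1}\mathrm{Cov}(\mathbf{X},Y\mid Y\in S)\in\mathcal{S_B}.$$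
   Context: $\mathrm{Cov}(\mathbf{X},Y\mid Y\in S)$ denotes the $p$-vector $E\{[Y-E(Y\mid Y\in S)][\mathbf{X}-E(\mathbf{X}\mid Y\in S)]\mid Y\in S\}$, i.e. the population OLS slope of $Y$ on $\mathbf{X}$ restricted to the event $Y\in S$ is $[\mathrm{Var}(\mathbf{X}\mid Y\in S)]^{-1}\mathrm{Cov}(\mathbf{X},Y\mid Y\in S)$. *)

theory Defs
  imports "HOL-Probability.Probability"
begin

definition cond_mean_event :: "'a measure \<Rightarrow> 'a set \<Rightarrow> ('a \<Rightarrow> real) \<Rightarrow> real" where
  "cond_mean_event M A Z = (\<integral>\<omega>. indicator A \<omega> * Z \<omega> \<partial>M) / measure M A"

definition cond_var_event :: "'a measure \<Rightarrow> 'a set \<Rightarrow> ('a \<Rightarrow> real^'p) \<Rightarrow> real^'p^'p" where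
  "cond_var_event M A X = (\<chi> i j. cond_mean_event M A
      (\<lambda>\<omega>. (X \<omega> $ i - cond_mean_event M A (\<lambda>\<omega>. X \<omega> $ i))
          * (X \<omega> $ j - cond_mean_event M A (\<lambda>\<omega>. X \<omega> $ j))))"

definition cond_cov_event :: "'a measure \<Rightarrow> 'a set \<Rightarrow> ('a \<Rightarrow> real^'p) \<Rightarrow> ('a \<Rightarrow> real) \<Rightarrow> real^'p" where
  "cond_cov_event M A X Y = (\<chi> i. cond_mean_event M A
      (\<lambda>\<omega>. (Y \<omega> - cond_mean_event M A Y) * (X \<omega> $ i - cond_mean_event M A (\<lambda>\<omega>. X \<omega> $ i))))"

definition mean_vec :: "'a measure \<Rightarrow> ('a \<Rightarrow> real^'p) \<Rightarrow> real^'p" where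
  "mean_vec M X = (\<chi> i. \<integral>\<omega>. X \<omega> $ i \<partial>M)"

definition cov_mat :: "'a measure \<Rightarrow> ('a \<Rightarrow> real^'p) \<Rightarrow> real^'p^'p" where
  "cov_mat M X = (\<chi> i j. \<integral>\<omega>. (X \<omega> $ i - mean_vec M X $ i) * (X \<omega> $ j - mean_vec M X $ j) \<partial>M)"

definition pos_def_mat :: "real^'p^'p \<Rightarrow> bool" where
  "pos_def_mat S \<longleftrightarrow> transpose S = S \<and> (\<forall>v. v \<noteq> 0 \<longrightarrow> v \<bullet> (S *v v) > 0)"

definition gen_sigma :: "'a measure \<Rightarrow> ('a \<Rightarrow> 'b::topological_space) \<Rightarrow> 'a measure" where
  "gen_sigma M Z = vimage_algebra (space M) Z borel"

text \<open>Independence of two random variables with possibly different (Borel) codomains: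
  P(X \<in> A, Z \<in> C) = P(X \<in> A) P(Z \<in> C) for all Borel sets A, C.
  (The library's indep_var needs both variables to share one codomain type.)\<close>
definition indep_rvs :: "'a measure \<Rightarrow> ('a \<Rightarrow> 'b::topological_space) \<Rightarrow> ('a \<Rightarrow> 'c::topological_space) \<Rightarrow> bool" where
  "indep_rvs M X Z \<longleftrightarrow> (\<forall>A \<in> sets borel. \<forall>C \<in> sets borel.
     measure M (X -` A \<inter> Z -` C \<inter> space M) = measure M (X -` A \<inter> space M) * measure M (Z -` C \<inter> space M))"

end

theory Submission
  imports Defs
begin

(* The linear design condition turns every direction b into a residual r_b(X) = q_b.X - a_0,
   q_b = b - B a, with E[r_b(X) | B^T X] = 0.  Because eps is independent of X, freezing eps
   shows E[r_b(X) g(B^T X, eps)] = 0 for every g, and the indicator of {Y in S}, Y itself and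
   the beta_l.X are all functions of (B^T X, eps).  Hence q_b is orthogonal to V beta_l and
   to C, where V = Var(X | Y in S) and C = Cov(X, Y | Y in S).  The q_b together with the
   beta_l span R^p, so if u solves the normal equation B^T V B u = B^T C then V B u = C,
   i.e. V^-1 C = B u lies in the span of the beta_l. *)

section \<open>Linear algebra\<close>

lemma transpose_matrix_vector_nth:
  fixes B :: "real^'k^'n"
  shows "(transpose B *v y) $ l = column l B \<bullet> y"
  unfolding inner_vec_def matrix_vector_mult_def transpose_def column_def by simp

lemma inner_matrix_vector_mult_transpose:
  fixes V :: "real^'n^'m"
  shows "x \<bullet> (V *v y) = (transpose V *v x) \<bullet> y"
  by (simp add: dot_lmul_matrix)

lemma matrix_inv_left:
  fixes V :: "real^'n^'n"
  assumes "invertible V"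
  shows "matrix_inv V ** V = mat 1"
  using assms unfolding invertible_def matrix_inv_def by (metis (mono_tags, lifting) someI_ex)

lemma psd_matrix_vector_mult_eq_zero:
  fixes V :: "real^'n^'n"
  assumes symmetric: "transpose V = V" and psd: "\<And>v. 0 \<le> v \<bullet> (V *v v)"
    and zero: "x \<bullet> (V *v x) = 0"
  shows "V *v x = 0"
proof -
  define y where "y = V *v x"
  define a where "a = y \<bullet> y"
  define b where "b = y \<bullet> (V *v y)"
  have "b \<ge> 0" unfolding b_def by (rule psd)
  have quadratic: "0 \<le> 2 * t * a + t\<^sup>2 * b" for t :: real
  proof -
    have "0 \<le> (x + t *\<^sub>R y) \<bullet> (V *v (x + t *\<^sub>R y))" by (rule psd)
    also have "\<dots> = x \<bullet> (V *v x) + t * (x \<bullet> (V *v y)) + t * (y \<bullet> (V *v x)) + t\<^sup>2 * b"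
      by (simp add: matrix_vector_right_distrib matrix_vector_mult_scaleR inner_add_left
          inner_add_right b_def power2_eq_square algebra_simps)
    also have "x \<bullet> (V *v y) = y \<bullet> (V *v x)"
      by (metis symmetric inner_commute inner_matrix_vector_mult_transpose)
    finally show ?thesis using zero by (simp add: a_def y_def)
  qed
  have "a = 0"
  proof (rule ccontr)
    assume "a \<noteq> 0"
    then have "a > 0" unfolding a_def by simp
    define t where "t = - a / (b + 1)"
    have "b + 1 \<noteq> 0" using \<open>b \<ge> 0\<close> by simp
    then have "2 * t * a + t\<^sup>2 * b = a\<^sup>2 * (b - 2 * (b + 1)) / (b + 1)\<^sup>2"
      unfolding t_def by (simp add: divide_simps power2_eq_square) algebra
    also have "\<dots> < 0"
      using \<open>a > 0\<close> \<open>b \<ge> 0\<close> by (intro divide_neg_pos mult_pos_neg) auto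
    finally show False using quadratic[of t] by simp
  qed
  then show ?thesis unfolding a_def y_def by simp
qed

lemma invertible_transpose_mult_psd_mult:
  fixes V :: "real^'n^'n" and B :: "real^'k^'n"
  assumes "invertible V" and "transpose V = V" and "\<And>v. 0 \<le> v \<bullet> (V *v v)"
    and "inj ((*v) B)"
  shows "invertible (transpose B ** V ** B)"
proof -
  have "u = 0" if "(transpose B ** V ** B) *v u = 0" for u
  proof -
    have "(B *v u) \<bullet> (V *v (B *v u)) = u \<bullet> (transpose B *v (V *v (B *v u)))"
      by (metis inner_matrix_vector_mult_transpose transpose_transpose)
    also have "\<dots> = u \<bullet> ((transpose B ** V ** B) *v u)"
      by (simp add: matrix_vector_mul_assoc[symmetric] matrix_mul_assoc)
    finally have "(B *v u) \<bullet> (V *v (B *v u)) = 0"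
      using that by simp
    then have "V *v (B *v u) = 0"
      by (rule psd_matrix_vector_mult_eq_zero[OF assms(2,3)])
    then have "B *v u = 0"
      using inj_matrix_vector_mult[OF assms(1)] by (metis inj_eq matrix_vector_mult_0_right)
    then show "u = 0"
      using assms(4) by (metis inj_eq matrix_vector_mult_0_right)
  qed
  then show ?thesis
    using matrix_left_invertible_ker invertible_left_inverse by blast
qed

lemma matrix_inv_mult_in_span_columns:
  fixes V :: "real^'n^'n" and B :: "real^'k^'n" and C :: "real^'n" and Q :: "(real^'n) set"
  assumes invertible: "invertible V" and symmetric: "transpose V = V"
    and psd: "\<And>v. 0 \<le> v \<bullet> (V *v v)" and rank: "rank B = CARD('k)"
    and spanning: "span (Q \<union> columns B) = UNIV"
    and Q_orthogonal_V_columns: "\<And>q l. q \<in> Q \<Longrightarrow> q \<bullet> (V *v column l B) = 0"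
    and Q_orthogonal_C: "\<And>q. q \<in> Q \<Longrightarrow> q \<bullet> C = 0"
  shows "matrix_inv V *v C \<in> span (columns B)"
proof -
  have "invertible (transpose B ** V ** B)"
    using invertible symmetric psd full_rank_injective[of B] rank
    by (intro invertible_transpose_mult_psd_mult) auto
  then obtain W where W: "(transpose B ** V ** B) ** W = mat 1"
    unfolding invertible_def by blast
  define u where "u = W *v (transpose B *v C)"
  have normal_equation: "transpose B *v (V *v (B *v u)) = transpose B *v C"
    by (simp add: u_def matrix_vector_mul_assoc matrix_mul_assoc W)
  have "V *v (B *v u) = C"
  proof (rule vector_eq_dot_span)
    show "V *v (B *v u) \<in> span (Q \<union> columns B)" "C \<in> span (Q \<union> columns B)"
      using spanning by simp_all
    fix z assume "z \<in> Q \<union> columns B"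
    then show "z \<bullet> (V *v (B *v u)) = z \<bullet> C"
    proof
      assume "z \<in> Q"
      have "column l B \<bullet> (V *v z) = 0" for l
        using Q_orthogonal_V_columns[OF \<open>z \<in> Q\<close>, of l]
        by (metis symmetric inner_commute inner_matrix_vector_mult_transpose)
      then have "transpose B *v (V *v z) = 0"
        unfolding vec_eq_iff transpose_matrix_vector_nth by simp
      moreover have "z \<bullet> (V *v (B *v u)) = (transpose B *v (V *v z)) \<bullet> u"
        by (simp add: inner_matrix_vector_mult_transpose symmetric)
      ultimately show ?thesis
        using Q_orthogonal_C[OF \<open>z \<in> Q\<close>] by simp
    next
      assume "z \<in> columns B"
      then obtain l where "z = column l B" unfolding columns_def by blast
      then show ?thesis
        using arg_cong[OF normal_equation, of "\<lambda>v. v $ l"]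
        by (simp only: transpose_matrix_vector_nth)
    qed
  qed
  then have "matrix_inv V *v C = B *v u"
    using matrix_inv_left[OF invertible]
    by (metis matrix_vector_mul_assoc matrix_vector_mul_lid)
  then show ?thesis by (simp add: matrix_vector_mult_in_columnspace)
qed

lemma span_range_diff_columns_eq_UNIV:
  fixes B :: "real^'k^'n" and d :: "real^'n \<Rightarrow> real^'k"
  shows "span (range (\<lambda>b. b - B *v d b) \<union> columns B) = UNIV"
proof -
  have "b \<in> span (range (\<lambda>b. b - B *v d b) \<union> columns B)" for b
  proof -
    have "b - B *v d b \<in> span (range (\<lambda>b. b - B *v d b) \<union> columns B)"
      by (intro span_base) auto
    moreover have "B *v d b \<in> span (range (\<lambda>b. b - B *v d b) \<union> columns B)"
      using matrix_vector_mult_in_columnspace span_mono[of "columns B"] by blast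
    ultimately show ?thesis using span_add by fastforce
  qed
  then show ?thesis by blast
qed

section \<open>Conditioning on a linear index\<close>

lemma borel_measurable_vec_nth [measurable]:
  "(\<lambda>x::real^'n. x $ i) \<in> borel_measurable borel"
  by (intro borel_measurable_continuous_onI continuous_on_component continuous_on_id)

lemma borel_measurable_matrix_vector_mult [measurable]:
  fixes A :: "real^'n^'m"
  shows "(\<lambda>x. A *v x) \<in> borel_measurable borel"
  by (intro borel_measurable_continuous_onI matrix_vector_mult_linear_continuous_on)

lemma integrable_inner_vec:
  fixes X :: "'a \<Rightarrow> real^'p::finite"
  assumes "\<And>j. integrable M (\<lambda>\<omega>. X \<omega> $ j)"
  shows "integrable M (\<lambda>\<omega>. v \<bullet> X \<omega>)"
  using assms by (simp add: inner_vec_def)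

lemma sigma_finite_subalgebra_gen_sigma:
  assumes "prob_space M" and "Z \<in> borel_measurable M"
  shows "sigma_finite_subalgebra M (gen_sigma M Z)"
proof (rule finite_measure_subalgebra_is_sigma_finite)
  interpret prob_space M by fact
  have "subalgebra M (gen_sigma M Z)"
    unfolding subalgebra_def gen_sigma_def
    using assms(2) by (auto simp: sets_vimage_algebra2 measurable_space measurable_sets)
  then show "finite_measure_subalgebra M (gen_sigma M Z)"
    unfolding finite_measure_subalgebra_def finite_measure_subalgebra_axioms_def
    by (simp add: finite_measure_axioms)
qed

lemma measurable_comp_gen_sigma:
  assumes "Z \<in> borel_measurable M" and "\<phi> \<in> borel_measurable borel"
  shows "(\<lambda>\<omega>. \<phi> (Z \<omega>)) \<in> borel_measurable (gen_sigma M Z)"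
  unfolding gen_sigma_def
  by (rule measurable_compose[OF measurable_vimage_algebra1 assms(2)])
    (use assms(1) in \<open>auto simp: measurable_space\<close>)

lemma integral_mult_eq_zero_if_real_cond_exp_eq_zero:
  fixes Z :: "'a \<Rightarrow> 'b::topological_space"
  assumes "prob_space M" and "Z \<in> borel_measurable M" and "R \<in> borel_measurable M"
    and cond_exp_zero: "AE \<omega> in M. real_cond_exp M (gen_sigma M Z) R \<omega> = 0"
    and "\<phi> \<in> borel_measurable borel"
    and "integrable M (\<lambda>\<omega>. \<phi> (Z \<omega>) * R \<omega>)"
  shows "(\<integral>\<omega>. \<phi> (Z \<omega>) * R \<omega> \<partial>M) = 0"
proof -
  interpret sigma_finite_subalgebra M "gen_sigma M Z"
    using sigma_finite_subalgebra_gen_sigma assms by blast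
  have "(\<integral>\<omega>. \<phi> (Z \<omega>) * R \<omega> \<partial>M) = (\<integral>\<omega>. \<phi> (Z \<omega>) * real_cond_exp M (gen_sigma M Z) R \<omega> \<partial>M)"
    by (rule real_cond_exp_intg(2)[symmetric])
      (use assms measurable_comp_gen_sigma in auto)
  also have "\<dots> = 0"
    by (rule integral_eq_zero_AE) (use cond_exp_zero in auto)
  finally show ?thesis .
qed

lemma (in sigma_finite_subalgebra) real_cond_exp_diff_eq_zero:
  assumes "integrable M U" and "integrable M \<phi>" and "\<phi> \<in> borel_measurable F"
    and "AE \<omega> in M. real_cond_exp M F U \<omega> = \<phi> \<omega>"
  shows "AE \<omega> in M. real_cond_exp M F (\<lambda>\<omega>. U \<omega> - \<phi> \<omega>) \<omega> = 0"
  using real_cond_exp_diff[OF assms(1,2)] real_cond_exp_F_meas[OF assms(2,3)] assms(4)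
  by eventually_elim simp

lemma real_cond_exp_linear_design_residual_eq_zero:
  fixes X :: "'a \<Rightarrow> real^'p::finite" and B :: "real^'k::finite^'p"
  assumes "prob_space M" and X_measurable: "X \<in> borel_measurable M"
    and integrable_X: "\<And>j. integrable M (\<lambda>\<omega>. X \<omega> $ j)"
    and linear_design: "AE \<omega> in M. real_cond_exp M (gen_sigma M (\<lambda>\<omega>. transpose B *v X \<omega>))
      (\<lambda>\<omega>. b \<bullet> X \<omega>) \<omega> = c + (\<Sum>i\<in>UNIV. a $ i * (column i B \<bullet> X \<omega>))"
  shows "AE \<omega> in M. real_cond_exp M (gen_sigma M (\<lambda>\<omega>. transpose B *v X \<omega>))
      (\<lambda>\<omega>. - c + (b - B *v a) \<bullet> X \<omega>) \<omega> = 0"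
proof -
  interpret prob_space M by fact
  let ?F = "gen_sigma M (\<lambda>\<omega>. transpose B *v X \<omega>)"
  have transposed_measurable: "(\<lambda>\<omega>. transpose B *v X \<omega>) \<in> borel_measurable M"
    using X_measurable by measurable
  interpret sigma_finite_subalgebra M ?F
    using sigma_finite_subalgebra_gen_sigma[OF assms(1) transposed_measurable] .
  have fitted: "(\<Sum>i\<in>UNIV. a $ i * (column i B \<bullet> x)) = (B *v a) \<bullet> x" for x
  proof -
    have "(\<Sum>i\<in>UNIV. a $ i * (column i B \<bullet> x)) = a \<bullet> (transpose B *v x)"
      by (simp only: inner_vec_def transpose_matrix_vector_nth inner_real_def)
    also have "\<dots> = (B *v a) \<bullet> x"
      by (simp only: inner_matrix_vector_mult_transpose transpose_transpose)
    finally show ?thesis .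
  qed
  have residual: "(\<lambda>\<omega>. - c + (b - B *v a) \<bullet> X \<omega>) = (\<lambda>\<omega>. b \<bullet> X \<omega> - (c + (B *v a) \<bullet> X \<omega>))"
    by (simp add: fun_eq_iff inner_diff_left)
  show ?thesis
    unfolding residual
  proof (rule real_cond_exp_diff_eq_zero)
    show "integrable M (\<lambda>\<omega>. b \<bullet> X \<omega>)" "integrable M (\<lambda>\<omega>. c + (B *v a) \<bullet> X \<omega>)"
      using integrable_inner_vec[OF integrable_X] by simp_all
    have "(\<lambda>\<omega>. c + a \<bullet> (transpose B *v X \<omega>)) \<in> borel_measurable ?F"
      by (rule measurable_comp_gen_sigma[OF transposed_measurable]) simp
    then show "(\<lambda>\<omega>. c + (B *v a) \<bullet> X \<omega>) \<in> borel_measurable ?F"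
      by (simp only: inner_matrix_vector_mult_transpose transpose_transpose)
    show "AE \<omega> in M. real_cond_exp M ?F (\<lambda>\<omega>. b \<bullet> X \<omega>) \<omega> = c + (B *v a) \<bullet> X \<omega>"
      using linear_design by (simp add: fitted)
  qed
qed

lemma linear_design_residuals:
  fixes X :: "'a \<Rightarrow> real^'p::finite" and B :: "real^'k::finite^'p"
  assumes "prob_space M" and "X \<in> borel_measurable M"
    and "\<And>j. integrable M (\<lambda>\<omega>. X \<omega> $ j)"
    and linear_design: "\<And>b. \<exists>c (a :: real^'k). AE \<omega> in M.
      real_cond_exp M (gen_sigma M (\<lambda>\<omega>. transpose B *v X \<omega>)) (\<lambda>\<omega>. b \<bullet> X \<omega>) \<omega>
        = c + (\<Sum>i\<in>UNIV. a $ i * (column i B \<bullet> X \<omega>))"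
  obtains c d where "\<And>b. AE \<omega> in M. real_cond_exp M (gen_sigma M (\<lambda>\<omega>. transpose B *v X \<omega>))
      (\<lambda>\<omega>. c b + (b - B *v d b) \<bullet> X \<omega>) \<omega> = 0"
proof -
  have "\<forall>b. \<exists>c d. AE \<omega> in M. real_cond_exp M (gen_sigma M (\<lambda>\<omega>. transpose B *v X \<omega>))
      (\<lambda>\<omega>. c + (b - B *v d) \<bullet> X \<omega>) \<omega> = 0"
  proof
    fix b
    from linear_design[of b] obtain c a where "AE \<omega> in M.
        real_cond_exp M (gen_sigma M (\<lambda>\<omega>. transpose B *v X \<omega>)) (\<lambda>\<omega>. b \<bullet> X \<omega>) \<omega>
          = c + (\<Sum>i\<in>UNIV. a $ i * (column i B \<bullet> X \<omega>))"
      by blast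
    then show "\<exists>c d. AE \<omega> in M. real_cond_exp M (gen_sigma M (\<lambda>\<omega>. transpose B *v X \<omega>))
        (\<lambda>\<omega>. c + (b - B *v d) \<bullet> X \<omega>) \<omega> = 0"
      using real_cond_exp_linear_design_residual_eq_zero[OF assms(1-3)] by blast
  qed
  then show ?thesis
    using that unfolding choice_iff by blast
qed

section \<open>Freezing an independent variable\<close>

lemma distr_pair_eq_pair_measure_if_indep_rvs:
  assumes "prob_space M" and [measurable]: "X \<in> borel_measurable M" "Z \<in> borel_measurable M"
    and indep: "indep_rvs M X Z"
  shows "distr M borel X \<Otimes>\<^sub>M distr M borel Z = distr M (borel \<Otimes>\<^sub>M borel) (\<lambda>\<omega>. (X \<omega>, Z \<omega>))"
proof (rule pair_measure_eqI)
  interpret prob_space M by fact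
  show "sigma_finite_measure (distr M borel X)" "sigma_finite_measure (distr M borel Z)"
    by (simp_all add: prob_space_distr prob_space_imp_sigma_finite)
  show "sets (distr M borel X \<Otimes>\<^sub>M distr M borel Z) = sets (distr M (borel \<Otimes>\<^sub>M borel) (\<lambda>\<omega>. (X \<omega>, Z \<omega>)))"
    by simp
  fix A C assume "A \<in> sets (distr M borel X)" "C \<in> sets (distr M borel Z)"
  then have AC: "A \<in> sets borel" "C \<in> sets borel" by simp_all
  have "emeasure (distr M borel X) A * emeasure (distr M borel Z) C
      = ennreal (prob (X -` A \<inter> space M) * prob (Z -` C \<inter> space M))"
    using AC by (simp add: emeasure_distr emeasure_eq_measure ennreal_mult)
  also have "\<dots> = emeasure M (X -` A \<inter> Z -` C \<inter> space M)"
    using AC indep by (simp add: indep_rvs_def emeasure_eq_measure)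
  also have "X -` A \<inter> Z -` C \<inter> space M = (\<lambda>\<omega>. (X \<omega>, Z \<omega>)) -` (A \<times> C) \<inter> space M"
    by auto
  finally show "emeasure (distr M borel X) A * emeasure (distr M borel Z) C
      = emeasure (distr M (borel \<Otimes>\<^sub>M borel) (\<lambda>\<omega>. (X \<omega>, Z \<omega>))) (A \<times> C)"
    using AC by (simp add: emeasure_distr)
qed

locale indep_rv_pair = prob_space M for M :: "'a measure" +
  fixes X :: "'a \<Rightarrow> 'b::second_countable_topology" and \<epsilon> :: "'a \<Rightarrow> 'e::second_countable_topology"
  assumes X_measurable[measurable]: "X \<in> borel_measurable M"
    and eps_measurable[measurable]: "\<epsilon> \<in> borel_measurable M"
    and indep: "indep_rvs M X \<epsilon>"
begin

lemma integral_eq_zero_if_frozen_integrals_eq_zero: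
  fixes h :: "'b \<times> 'e \<Rightarrow> real"
  assumes h_measurable: "h \<in> borel_measurable borel"
    and integrable: "integrable M (\<lambda>\<omega>. h (X \<omega>, \<epsilon> \<omega>))"
    and frozen: "\<And>e. integrable M (\<lambda>\<omega>. h (X \<omega>, e)) \<Longrightarrow> (\<integral>\<omega>. h (X \<omega>, e) \<partial>M) = 0"
  shows "(\<integral>\<omega>. h (X \<omega>, \<epsilon> \<omega>) \<partial>M) = 0"
proof -
  let ?PX = "distr M borel X" and ?PE = "distr M borel \<epsilon>"
  interpret PX: prob_space ?PX by (rule prob_space_distr) simp
  interpret PE: prob_space ?PE by (rule prob_space_distr) simp
  interpret pair_sigma_finite ?PX ?PE ..
  have joint: "?PX \<Otimes>\<^sub>M ?PE = distr M (borel \<Otimes>\<^sub>M borel) (\<lambda>\<omega>. (X \<omega>, \<epsilon> \<omega>))"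
    by (rule distr_pair_eq_pair_measure_if_indep_rvs) (simp_all add: prob_space_axioms indep)
  have [measurable]: "h \<in> borel_measurable (borel \<Otimes>\<^sub>M borel)"
    using h_measurable by (simp add: borel_prod)
  have integrable_joint: "integrable (?PX \<Otimes>\<^sub>M ?PE) (\<lambda>(x, e). h (x, e))"
    unfolding joint using integrable by (subst integrable_distr_eq) auto
  have "(\<integral>\<omega>. h (X \<omega>, \<epsilon> \<omega>) \<partial>M) = (\<integral>p. h p \<partial>(?PX \<Otimes>\<^sub>M ?PE))"
    unfolding joint by (subst integral_distr) auto
  also have "\<dots> = (\<integral>e. (\<integral>x. h (x, e) \<partial>?PX) \<partial>?PE)"
    using integral_snd[OF integrable_joint] by simp
  also have "\<dots> = 0"
  proof (rule integral_eq_zero_AE)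
    show "AE e in ?PE. (\<integral>x. h (x, e) \<partial>?PX) = 0"
      using AE_integrable_snd[OF integrable_joint]
    proof eventually_elim
      case (elim e)
      then have "integrable M (\<lambda>\<omega>. h (X \<omega>, e))"
        by (subst (asm) integrable_distr_eq) auto
      then show ?case
        using frozen by (subst integral_distr) auto
    qed
  qed
  finally show ?thesis .
qed

lemma integral_residual_mult_eq_zero:
  fixes T :: "'b \<Rightarrow> 'c::second_countable_topology" and r :: "'b \<Rightarrow> real" and g :: "'c \<times> 'e \<Rightarrow> real"
  assumes [measurable]: "T \<in> borel_measurable borel" "r \<in> borel_measurable borel"
      "g \<in> borel_measurable borel"
    and residual: "AE \<omega> in M. real_cond_exp M (gen_sigma M (\<lambda>\<omega>. T (X \<omega>))) (\<lambda>\<omega>. r (X \<omega>)) \<omega> = 0"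
    and integrable: "integrable M (\<lambda>\<omega>. r (X \<omega>) * g (T (X \<omega>), \<epsilon> \<omega>))"
  shows "(\<integral>\<omega>. r (X \<omega>) * g (T (X \<omega>), \<epsilon> \<omega>) \<partial>M) = 0"
proof -
  have [measurable]: "g \<in> borel_measurable (borel \<Otimes>\<^sub>M borel)"
    by (simp add: borel_prod)
  have "(\<lambda>(x, e). r x * g (T x, e)) \<in> borel_measurable (borel \<Otimes>\<^sub>M borel)"
    by measurable
  then have h_measurable: "(\<lambda>(x, e). r x * g (T x, e)) \<in> borel_measurable borel"
    by (simp add: borel_prod)
  have frozen: "(\<integral>\<omega>. r (X \<omega>) * g (T (X \<omega>), e) \<partial>M) = 0"
    if "integrable M (\<lambda>\<omega>. r (X \<omega>) * g (T (X \<omega>), e))" for e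
    using integral_mult_eq_zero_if_real_cond_exp_eq_zero[OF prob_space_axioms _ _ residual,
        of "\<lambda>z. g (z, e)"] that
    by (simp add: mult.commute)
  show ?thesis
    using integral_eq_zero_if_frozen_integrals_eq_zero[OF h_measurable] integrable frozen by simp
qed

lemma cond_mean_event_residual_mult_eq_zero:
  fixes T :: "'b \<Rightarrow> 'c::second_countable_topology" and r :: "'b \<Rightarrow> real"
    and f k :: "'c \<times> 'e \<Rightarrow> real" and h :: "'a \<Rightarrow> real"
  assumes [measurable]: "T \<in> borel_measurable borel" "r \<in> borel_measurable borel"
      "f \<in> borel_measurable borel" "k \<in> borel_measurable borel" "S \<in> sets borel"
    and model: "\<And>\<omega>. \<omega> \<in> space M \<Longrightarrow> Y \<omega> = f (T (X \<omega>), \<epsilon> \<omega>)"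
    and h_eq: "\<And>\<omega>. \<omega> \<in> space M \<Longrightarrow> h \<omega> = k (T (X \<omega>), \<epsilon> \<omega>)"
    and residual: "AE \<omega> in M. real_cond_exp M (gen_sigma M (\<lambda>\<omega>. T (X \<omega>))) (\<lambda>\<omega>. r (X \<omega>)) \<omega> = 0"
    and integrable: "set_integrable M (Y -` S \<inter> space M) (\<lambda>\<omega>. r (X \<omega>) * h \<omega>)"
  shows "cond_mean_event M (Y -` S \<inter> space M) (\<lambda>\<omega>. r (X \<omega>) * h \<omega>) = 0"
proof -
  define g where "g p = indicator S (f p) * k p" for p
  have [measurable]: "g \<in> borel_measurable borel"
    unfolding g_def by measurable
  have restricted: "indicator (Y -` S \<inter> space M) \<omega> * (r (X \<omega>) * h \<omega>)
      = r (X \<omega>) * g (T (X \<omega>), \<epsilon> \<omega>)" if "\<omega> \<in> space M" for \<omega>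
    using that by (simp add: g_def model h_eq indicator_def)
  have "integrable M (\<lambda>\<omega>. r (X \<omega>) * g (T (X \<omega>), \<epsilon> \<omega>))"
    using integrable unfolding set_integrable_def
    by (simp add: Bochner_Integration.integrable_cong[OF refl restricted])
  then have "(\<integral>\<omega>. r (X \<omega>) * g (T (X \<omega>), \<epsilon> \<omega>) \<partial>M) = 0"
    using integral_residual_mult_eq_zero[of T r g] residual by simp
  then show ?thesis
    unfolding cond_mean_event_def
    by (simp add: Bochner_Integration.integral_cong[OF refl restricted])
qed

end

section \<open>Moments on an event\<close>

lemma set_integrable_sum:
  fixes f :: "'i \<Rightarrow> 'a \<Rightarrow> 'b::{banach, second_countable_topology}"
  assumes "\<And>i. i \<in> I \<Longrightarrow> set_integrable M A (f i)"
  shows "set_integrable M A (\<lambda>x. \<Sum>i\<in>I. f i x)"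
  using assms unfolding set_integrable_def scaleR_sum_right by (rule Bochner_Integration.integrable_sum)

lemma set_integral_sum:
  fixes f :: "'i \<Rightarrow> 'a \<Rightarrow> 'b::{banach, second_countable_topology}"
  assumes "\<And>i. i \<in> I \<Longrightarrow> set_integrable M A (f i)"
  shows "(LINT x:A|M. \<Sum>i\<in>I. f i x) = (\<Sum>i\<in>I. LINT x:A|M. f i x)"
  using assms unfolding set_integrable_def set_lebesgue_integral_def scaleR_sum_right
  by (rule Bochner_Integration.integral_sum)

lemma cond_mean_event_eq_set_integral:
  "cond_mean_event M A Z = (LINT \<omega>:A|M. Z \<omega>) / measure M A"
  unfolding cond_mean_event_def set_lebesgue_integral_def by simp

lemma cond_mean_event_add:
  "set_integrable M A f \<Longrightarrow> set_integrable M A g \<Longrightarrow>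
    cond_mean_event M A (\<lambda>\<omega>. f \<omega> + g \<omega>) = cond_mean_event M A f + cond_mean_event M A g"
  by (simp add: cond_mean_event_eq_set_integral add_divide_distrib)

lemma cond_mean_event_diff:
  "set_integrable M A f \<Longrightarrow> set_integrable M A g \<Longrightarrow>
    cond_mean_event M A (\<lambda>\<omega>. f \<omega> - g \<omega>) = cond_mean_event M A f - cond_mean_event M A g"
  by (simp add: cond_mean_event_eq_set_integral diff_divide_distrib)

lemma cond_mean_event_cmult: "cond_mean_event M A (\<lambda>\<omega>. c * f \<omega>) = c * cond_mean_event M A f"
  by (simp add: cond_mean_event_eq_set_integral)

lemma cond_mean_event_sum:
  "(\<And>i. i \<in> I \<Longrightarrow> set_integrable M A (f i)) \<Longrightarrow>
    cond_mean_event M A (\<lambda>\<omega>. \<Sum>i\<in>I. f i \<omega>) = (\<Sum>i\<in>I. cond_mean_event M A (f i))"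
  by (simp add: cond_mean_event_eq_set_integral set_integral_sum sum_divide_distrib)

lemma cond_mean_event_const:
  "A \<in> sets M \<Longrightarrow> measure M A \<noteq> 0 \<Longrightarrow> cond_mean_event M A (\<lambda>_. c) = c"
  unfolding cond_mean_event_def by (simp add: Int_absorb2 sets.sets_into_space)

lemma cond_mean_event_nonneg: "(\<And>\<omega>. 0 \<le> f \<omega>) \<Longrightarrow> 0 \<le> cond_mean_event M A f"
  unfolding cond_mean_event_def by (auto intro!: divide_nonneg_nonneg integral_nonneg_AE)

definition cond_mean_vec_event :: "'a measure \<Rightarrow> 'a set \<Rightarrow> ('a \<Rightarrow> real^'p) \<Rightarrow> real^'p" where
  "cond_mean_vec_event M A X = (\<chi> j. cond_mean_event M A (\<lambda>\<omega>. X \<omega> $ j))"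

lemma cond_var_event_nth:
  "cond_var_event M A X $ i $ j = cond_mean_event M A (\<lambda>\<omega>.
     (X \<omega> $ i - cond_mean_vec_event M A X $ i) * (X \<omega> $ j - cond_mean_vec_event M A X $ j))"
  by (simp add: cond_var_event_def cond_mean_vec_event_def)

lemma cond_cov_event_nth:
  "cond_cov_event M A X Y $ i = cond_mean_event M A (\<lambda>\<omega>.
     (Y \<omega> - cond_mean_event M A Y) * (X \<omega> $ i - cond_mean_vec_event M A X $ i))"
  by (simp add: cond_cov_event_def cond_mean_vec_event_def)

lemma transpose_cond_var_event: "transpose (cond_var_event M A X) = cond_var_event M A X"
  by (simp add: vec_eq_iff transpose_def cond_var_event_nth mult.commute)

locale moments_on_event = prob_space M for M :: "'a measure" +
  fixes A :: "'a set" and X :: "'a \<Rightarrow> real^'p::finite" and Y :: "'a \<Rightarrow> real"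
  assumes event_A: "A \<in> events" and prob_A_pos: "prob A > 0"
    and set_integrable_X: "\<And>j. set_integrable M A (\<lambda>\<omega>. X \<omega> $ j)"
    and set_integrable_XX: "\<And>j l. set_integrable M A (\<lambda>\<omega>. X \<omega> $ j * X \<omega> $ l)"
    and set_integrable_Y: "set_integrable M A Y"
    and set_integrable_YX: "\<And>j. set_integrable M A (\<lambda>\<omega>. Y \<omega> * X \<omega> $ j)"
begin

abbreviation mean_X :: "real^'p" where "mean_X \<equiv> cond_mean_vec_event M A X"

abbreviation mean_Y :: real where "mean_Y \<equiv> cond_mean_event M A Y"

lemma set_integrable_const: "set_integrable M A (\<lambda>_. c)"
  unfolding set_integrable_def
  by (rule integrable_scaleR_left) (use event_A in \<open>simp add: emeasure_eq_measure\<close>)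

lemma set_integrable_inner_X: "set_integrable M A (\<lambda>\<omega>. v \<bullet> X \<omega>)"
proof -
  have "set_integrable M A (\<lambda>\<omega>. \<Sum>j\<in>UNIV. v $ j * X \<omega> $ j)"
    by (intro set_integrable_sum set_integrable_mult_right set_integrable_X)
  then show ?thesis by (simp add: inner_vec_def)
qed

lemma set_integrable_inner_X_mult: "set_integrable M A (\<lambda>\<omega>. (v \<bullet> X \<omega>) * (w \<bullet> X \<omega>))"
proof -
  have "set_integrable M A (\<lambda>\<omega>. \<Sum>j\<in>UNIV. \<Sum>l\<in>UNIV. (v $ j * w $ l) * (X \<omega> $ j * X \<omega> $ l))"
    by (intro set_integrable_sum set_integrable_mult_right set_integrable_XX)
  then show ?thesis by (simp add: inner_vec_def sum_product mult_ac)
qed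

lemma set_integrable_Y_mult_inner_X: "set_integrable M A (\<lambda>\<omega>. Y \<omega> * (v \<bullet> X \<omega>))"
proof -
  have "set_integrable M A (\<lambda>\<omega>. \<Sum>j\<in>UNIV. v $ j * (Y \<omega> * X \<omega> $ j))"
    by (intro set_integrable_sum set_integrable_mult_right set_integrable_YX)
  then show ?thesis by (simp add: inner_vec_def sum_distrib_left mult_ac)
qed

lemma set_integrable_affine: "set_integrable M A (\<lambda>\<omega>. c + v \<bullet> X \<omega>)"
  by (intro set_integral_add(1) set_integrable_const set_integrable_inner_X)

lemma set_integrable_affine_mult_affine:
  "set_integrable M A (\<lambda>\<omega>. (c + v \<bullet> X \<omega>) * (d + w \<bullet> X \<omega>))"
proof -
  have "set_integrable M A (\<lambda>\<omega>. c * d + c * (w \<bullet> X \<omega>) + d * (v \<bullet> X \<omega>) + (v \<bullet> X \<omega>) * (w \<bullet> X \<omega>))"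
    by (intro set_integral_add(1) set_integrable_mult_right set_integrable_const
        set_integrable_inner_X set_integrable_inner_X_mult)
  moreover have "(\<lambda>\<omega>. c * d + c * (w \<bullet> X \<omega>) + d * (v \<bullet> X \<omega>) + (v \<bullet> X \<omega>) * (w \<bullet> X \<omega>))
      = (\<lambda>\<omega>. (c + v \<bullet> X \<omega>) * (d + w \<bullet> X \<omega>))"
    by (simp add: fun_eq_iff algebra_simps)
  ultimately show ?thesis by simp
qed

lemma set_integrable_affine_mult_Y: "set_integrable M A (\<lambda>\<omega>. (c + v \<bullet> X \<omega>) * Y \<omega>)"
proof -
  have "set_integrable M A (\<lambda>\<omega>. c * Y \<omega> + Y \<omega> * (v \<bullet> X \<omega>))"
    by (intro set_integral_add(1) set_integrable_mult_right set_integrable_Y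
        set_integrable_Y_mult_inner_X)
  moreover have "(\<lambda>\<omega>. c * Y \<omega> + Y \<omega> * (v \<bullet> X \<omega>)) = (\<lambda>\<omega>. (c + v \<bullet> X \<omega>) * Y \<omega>)"
    by (simp add: fun_eq_iff algebra_simps)
  ultimately show ?thesis by simp
qed

lemma cond_mean_event_affine: "cond_mean_event M A (\<lambda>\<omega>. c + v \<bullet> X \<omega>) = c + v \<bullet> mean_X"
proof -
  have "cond_mean_event M A (\<lambda>\<omega>. v \<bullet> X \<omega>) = cond_mean_event M A (\<lambda>\<omega>. \<Sum>j\<in>UNIV. v $ j * X \<omega> $ j)"
    by (simp add: inner_vec_def)
  also have "\<dots> = v \<bullet> mean_X"
    by (simp add: cond_mean_event_sum set_integrable_X cond_mean_event_cmult inner_vec_def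
        cond_mean_vec_event_def)
  finally show ?thesis
    using event_A prob_A_pos
    by (simp add: cond_mean_event_add set_integrable_const set_integrable_inner_X cond_mean_event_const)
qed

lemma inner_cond_var_event:
  "v \<bullet> (cond_var_event M A X *v w)
     = cond_mean_event M A (\<lambda>\<omega>. (v \<bullet> (X \<omega> - mean_X)) * (w \<bullet> (X \<omega> - mean_X)))"
proof -
  let ?D = "\<lambda>i j \<omega>. (v $ i * w $ j) * ((X \<omega> $ i - mean_X $ i) * (X \<omega> $ j - mean_X $ j))"
  have integrable: "set_integrable M A (?D i j)" for i j
    using set_integrable_affine_mult_affine[of "- mean_X $ i" "axis i 1" "- mean_X $ j" "axis j 1"]
    by (intro set_integrable_mult_right) (simp add: inner_axis')
  have "v \<bullet> (cond_var_event M A X *v w) = (\<Sum>i\<in>UNIV. \<Sum>j\<in>UNIV. cond_mean_event M A (?D i j))"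
    by (simp add: inner_vec_def matrix_vector_mult_def cond_var_event_nth cond_mean_event_cmult
        sum_distrib_left mult_ac)
  also have "\<dots> = cond_mean_event M A (\<lambda>\<omega>. \<Sum>i\<in>UNIV. \<Sum>j\<in>UNIV. ?D i j \<omega>)"
    by (simp add: cond_mean_event_sum set_integrable_sum integrable)
  also have "\<dots> = cond_mean_event M A (\<lambda>\<omega>. (v \<bullet> (X \<omega> - mean_X)) * (w \<bullet> (X \<omega> - mean_X)))"
    by (simp add: inner_vec_def sum_product mult_ac)
  finally show ?thesis .
qed

lemma cond_var_event_nonneg: "0 \<le> v \<bullet> (cond_var_event M A X *v v)"
  by (simp add: inner_cond_var_event cond_mean_event_nonneg)

lemma inner_cond_cov_event:
  "w \<bullet> cond_cov_event M A X Y = cond_mean_event M A (\<lambda>\<omega>. (Y \<omega> - mean_Y) * (w \<bullet> (X \<omega> - mean_X)))"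
proof -
  let ?D = "\<lambda>j \<omega>. w $ j * ((Y \<omega> - mean_Y) * (X \<omega> $ j - mean_X $ j))"
  have integrable: "set_integrable M A (?D j)" for j
  proof -
    have "set_integrable M A (\<lambda>\<omega>. (- mean_X $ j + axis j 1 \<bullet> X \<omega>) * Y \<omega>
        - mean_Y * (- mean_X $ j + axis j 1 \<bullet> X \<omega>))"
      by (intro set_integral_diff(1) set_integrable_mult_right set_integrable_affine_mult_Y
          set_integrable_affine)
    then show ?thesis
      by (intro set_integrable_mult_right) (simp add: inner_axis' algebra_simps)
  qed
  have "w \<bullet> cond_cov_event M A X Y = (\<Sum>j\<in>UNIV. cond_mean_event M A (?D j))"
    by (simp add: inner_vec_def cond_cov_event_nth cond_mean_event_cmult)
  also have "\<dots> = cond_mean_event M A (\<lambda>\<omega>. \<Sum>j\<in>UNIV. ?D j \<omega>)"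
    by (simp add: cond_mean_event_sum integrable)
  also have "\<dots> = cond_mean_event M A (\<lambda>\<omega>. (Y \<omega> - mean_Y) * (w \<bullet> (X \<omega> - mean_X)))"
    by (simp add: inner_vec_def sum_distrib_left mult_ac)
  finally show ?thesis .
qed

lemma inner_cond_var_event_centered:
  assumes centered: "cond_mean_event M A (\<lambda>\<omega>. c + v \<bullet> X \<omega>) = 0"
  shows "v \<bullet> (cond_var_event M A X *v w) = cond_mean_event M A (\<lambda>\<omega>. (c + v \<bullet> X \<omega>) * (w \<bullet> X \<omega>))"
proof -
  have shift: "v \<bullet> (X \<omega> - mean_X) = c + v \<bullet> X \<omega>" for \<omega>
    using centered by (simp add: cond_mean_event_affine inner_diff_right)
  have "v \<bullet> (cond_var_event M A X *v w)
      = cond_mean_event M A (\<lambda>\<omega>. (c + v \<bullet> X \<omega>) * (w \<bullet> (X \<omega> - mean_X)))"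
    by (simp only: inner_cond_var_event shift)
  also have "\<dots> = cond_mean_event M A
      (\<lambda>\<omega>. (c + v \<bullet> X \<omega>) * (w \<bullet> X \<omega>) - (w \<bullet> mean_X) * (c + v \<bullet> X \<omega>))"
    by (simp add: inner_diff_right algebra_simps)
  also have "\<dots> = cond_mean_event M A (\<lambda>\<omega>. (c + v \<bullet> X \<omega>) * (w \<bullet> X \<omega>))"
    using set_integrable_affine_mult_affine[of c v 0 w]
    by (simp add: cond_mean_event_diff set_integrable_affine cond_mean_event_cmult centered)
  finally show ?thesis .
qed

lemma inner_cond_cov_event_centered:
  assumes centered: "cond_mean_event M A (\<lambda>\<omega>. c + v \<bullet> X \<omega>) = 0"
  shows "v \<bullet> cond_cov_event M A X Y = cond_mean_event M A (\<lambda>\<omega>. (c + v \<bullet> X \<omega>) * Y \<omega>)"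
proof -
  have shift: "v \<bullet> (X \<omega> - mean_X) = c + v \<bullet> X \<omega>" for \<omega>
    using centered by (simp add: cond_mean_event_affine inner_diff_right)
  have "v \<bullet> cond_cov_event M A X Y
      = cond_mean_event M A (\<lambda>\<omega>. (Y \<omega> - mean_Y) * (c + v \<bullet> X \<omega>))"
    by (simp only: inner_cond_cov_event shift)
  also have "\<dots> = cond_mean_event M A (\<lambda>\<omega>. (c + v \<bullet> X \<omega>) * Y \<omega> - mean_Y * (c + v \<bullet> X \<omega>))"
    by (simp add: algebra_simps)
  also have "\<dots> = cond_mean_event M A (\<lambda>\<omega>. (c + v \<bullet> X \<omega>) * Y \<omega>)"
    by (simp add: cond_mean_event_diff set_integrable_affine_mult_Y set_integrable_affine
        cond_mean_event_cmult centered)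
  finally show ?thesis .
qed

end

lemma integrable_mult_if_integrable_squares:
  fixes f g :: "'a \<Rightarrow> real"
  assumes "f \<in> borel_measurable M" "g \<in> borel_measurable M"
    and "integrable M (\<lambda>\<omega>. (f \<omega>)\<^sup>2)" "integrable M (\<lambda>\<omega>. (g \<omega>)\<^sup>2)"
  shows "integrable M (\<lambda>\<omega>. f \<omega> * g \<omega>)"
proof (rule Bochner_Integration.integrable_bound)
  show "integrable M (\<lambda>\<omega>. (f \<omega>)\<^sup>2 + (g \<omega>)\<^sup>2)" using assms(3,4) by simp
  show "(\<lambda>\<omega>. f \<omega> * g \<omega>) \<in> borel_measurable M" using assms(1,2) by simp
  have "\<bar>x * y\<bar> \<le> x\<^sup>2 + y\<^sup>2" for x y :: real
  proof -
    have "2 * (\<bar>x\<bar> * \<bar>y\<bar>) \<le> x\<^sup>2 + y\<^sup>2"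
      using sum_squares_bound[of "\<bar>x\<bar>" "\<bar>y\<bar>"] by (simp add: mult.assoc)
    moreover have "0 \<le> \<bar>x\<bar> * \<bar>y\<bar>" by simp
    ultimately show ?thesis unfolding abs_mult by linarith
  qed
  then show "AE \<omega> in M. norm (f \<omega> * g \<omega>) \<le> norm ((f \<omega>)\<^sup>2 + (g \<omega>)\<^sup>2)" by simp
qed

lemma moments_on_event_if_square_integrable:
  fixes X :: "'a \<Rightarrow> real^'p::finite"
  assumes "prob_space M" and [measurable]: "X \<in> borel_measurable M"
    and square_integrable: "\<And>j. integrable M (\<lambda>\<omega>. (X \<omega> $ j)\<^sup>2)"
    and "A \<in> sets M" and "measure M A > 0"
    and "set_integrable M A Y" and "\<And>j. set_integrable M A (\<lambda>\<omega>. Y \<omega> * X \<omega> $ j)"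
  shows "moments_on_event M A X Y"
proof -
  interpret prob_space M by fact
  have X_nth_measurable: "(\<lambda>\<omega>. X \<omega> $ j) \<in> borel_measurable M" for j
    by measurable
  have integrable_X: "integrable M (\<lambda>\<omega>. X \<omega> $ j)" for j
    using square_integrable_imp_integrable[OF X_nth_measurable square_integrable] .
  have integrable_XX: "integrable M (\<lambda>\<omega>. X \<omega> $ j * X \<omega> $ l)" for j l
    using integrable_mult_if_integrable_squares[OF X_nth_measurable X_nth_measurable
        square_integrable square_integrable] .
  show ?thesis
    using assms(4-7) integrable_mult_indicator[OF \<open>A \<in> sets M\<close> integrable_X]
      integrable_mult_indicator[OF \<open>A \<in> sets M\<close> integrable_XX]
    by unfold_locales (simp_all add: set_integrable_def)
qed

section \<open>The inverse regression direction\<close>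

lemma residual_direction_orthogonal_cond_var_cov:
  fixes X :: "'a \<Rightarrow> real^'p::finite" and \<epsilon> :: "'a \<Rightarrow> 'e::second_countable_topology"
    and B :: "real^'k::finite^'p" and f :: "(real^'k) \<times> 'e \<Rightarrow> real"
  assumes "indep_rv_pair M X \<epsilon>" and "moments_on_event M (Y -` S \<inter> space M) X Y"
    and f_measurable: "f \<in> borel_measurable borel" and S_borel: "S \<in> sets borel"
    and model: "\<And>\<omega>. \<omega> \<in> space M \<Longrightarrow> Y \<omega> = f (transpose B *v X \<omega>, \<epsilon> \<omega>)"
    and residual: "AE \<omega> in M. real_cond_exp M (gen_sigma M (\<lambda>\<omega>. transpose B *v X \<omega>))
      (\<lambda>\<omega>. c + q \<bullet> X \<omega>) \<omega> = 0"
  shows "q \<bullet> (cond_var_event M (Y -` S \<inter> space M) X *v column l B) = 0"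
    and "q \<bullet> cond_cov_event M (Y -` S \<inter> space M) X Y = 0"
proof -
  interpret indep_rv_pair M X \<epsilon> by fact
  interpret moments_on_event M "Y -` S \<inter> space M" X Y by fact
  let ?A = "Y -` S \<inter> space M"
  have residual_mean_zero: "cond_mean_event M ?A (\<lambda>\<omega>. (c + q \<bullet> X \<omega>) * h \<omega>) = 0"
    if "k \<in> borel_measurable borel" and "\<And>\<omega>. \<omega> \<in> space M \<Longrightarrow> h \<omega> = k (transpose B *v X \<omega>, \<epsilon> \<omega>)"
      and "set_integrable M ?A (\<lambda>\<omega>. (c + q \<bullet> X \<omega>) * h \<omega>)" for h k
    using cond_mean_event_residual_mult_eq_zero[where r = "\<lambda>x. c + q \<bullet> x",
        OF borel_measurable_matrix_vector_mult _ f_measurable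
        that(1) S_borel model that(2) residual that(3)]
    by simp
  have mean_zero: "cond_mean_event M ?A (\<lambda>\<omega>. c + q \<bullet> X \<omega>) = 0"
    using residual_mean_zero[of "\<lambda>_. 1" "\<lambda>_. 1"] set_integrable_affine[of c q] by simp
  have coordinate_measurable: "(\<lambda>p. fst p $ l) \<in> borel_measurable (borel :: ((real^'k) \<times> 'e) measure)"
    by (simp add: borel_prod[symmetric])
  have "set_integrable M ?A (\<lambda>\<omega>. (c + q \<bullet> X \<omega>) * (column l B \<bullet> X \<omega>))"
    using set_integrable_affine_mult_affine[of c q 0 "column l B"] by simp
  then have "cond_mean_event M ?A (\<lambda>\<omega>. (c + q \<bullet> X \<omega>) * (column l B \<bullet> X \<omega>)) = 0"
    by (rule residual_mean_zero[OF coordinate_measurable, rotated])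
      (simp only: transpose_matrix_vector_nth fst_conv)
  then show "q \<bullet> (cond_var_event M ?A X *v column l B) = 0"
    by (simp only: inner_cond_var_event_centered[OF mean_zero])
  show "q \<bullet> cond_cov_event M ?A X Y = 0"
    using residual_mean_zero[OF f_measurable model set_integrable_affine_mult_Y]
    by (simp only: inner_cond_cov_event_centered[OF mean_zero])
qed

theorem lemma1:
  fixes M :: "'a measure"
    and X :: "'a \<Rightarrow> real^('p::finite)" and Y :: "'a \<Rightarrow> real" and \<epsilon> :: "'a \<Rightarrow> real"
    and f :: "(real^('k::finite)) \<times> real \<Rightarrow> real"
    and B :: "real^'k^'p"
    and S :: "real set"
  assumes "prob_space M"
    and X_meas: "X \<in> borel_measurable M"
    and eps_meas: "\<epsilon> \<in> borel_measurable M"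
    and X_sq: "\<And>i. integrable M (\<lambda>\<omega>. (X \<omega> $ i)\<^sup>2)"
    and Sigma_pd: "pos_def_mat (cov_mat M X)"
    and f_meas: "f \<in> borel_measurable borel"
    and model: "\<And>\<omega>. \<omega> \<in> space M \<Longrightarrow> Y \<omega> = f (transpose B *v X \<omega>, \<epsilon> \<omega>)"
    and B_rank: "rank B = CARD('k)"
    and indep: "indep_rvs M X \<epsilon>"
    and eps_int: "integrable M \<epsilon>"
    and eps_mean: "(\<integral>\<omega>. \<epsilon> \<omega> \<partial>M) = 0"
    and LDC: "\<And>b. \<exists>a0 (a :: real^'k). AE \<omega> in M.
        real_cond_exp M (gen_sigma M (\<lambda>\<omega>. transpose B *v X \<omega>)) (\<lambda>\<omega>. b \<bullet> X \<omega>) \<omega>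
          = a0 + (\<Sum>i\<in>UNIV. a $ i * (column i B \<bullet> X \<omega>))"
    and CCV: "\<exists>V :: real^'p^'p. \<forall>i j. AE \<omega> in M.
        real_cond_exp M (gen_sigma M (\<lambda>\<omega>. transpose B *v X \<omega>))
          (\<lambda>\<omega>. (X \<omega> $ i - real_cond_exp M (gen_sigma M (\<lambda>\<omega>. transpose B *v X \<omega>)) (\<lambda>\<omega>. X \<omega> $ i) \<omega>)
              * (X \<omega> $ j - real_cond_exp M (gen_sigma M (\<lambda>\<omega>. transpose B *v X \<omega>)) (\<lambda>\<omega>. X \<omega> $ j) \<omega>)) \<omega>
          = V $ i $ j"
    and S_borel: "S \<in> sets borel"
    and S_pos: "measure M (Y -` S \<inter> space M) > 0"
    and Y_int_S: "integrable M (\<lambda>\<omega>. indicator (Y -` S \<inter> space M) \<omega> * Y \<omega>)"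
    and XY_int_S: "\<And>i. integrable M (\<lambda>\<omega>. indicator (Y -` S \<inter> space M) \<omega> * (Y \<omega> * X \<omega> $ i))"
    and V_S_inv: "invertible (cond_var_event M (Y -` S \<inter> space M) X)"
  shows "matrix_inv (cond_var_event M (Y -` S \<inter> space M) X)
           *v cond_cov_event M (Y -` S \<inter> space M) X Y \<in> span (columns B)"
proof -
  interpret prob_space M by fact
  note [measurable] = X_meas eps_meas
  let ?A = "Y -` S \<inter> space M"
  have "f \<in> borel_measurable (borel \<Otimes>\<^sub>M borel)"
    using f_meas by (simp add: borel_prod)
  then have "(\<lambda>\<omega>. f (transpose B *v X \<omega>, \<epsilon> \<omega>)) \<in> borel_measurable M"
    by measurable
  then have "Y \<in> borel_measurable M"
    by (rule measurable_cong[THEN iffD1, rotated]) (simp add: model)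
  then have "?A \<in> sets M"
    using S_borel by (rule measurable_sets)
  then have moments: "moments_on_event M ?A X Y"
    using moments_on_event_if_square_integrable[where Y = Y, OF \<open>prob_space M\<close> X_meas X_sq _ S_pos]
      Y_int_S XY_int_S
    by (simp add: set_integrable_def)
  have pair: "indep_rv_pair M X \<epsilon>"
    using X_meas eps_meas indep by unfold_locales
  have integrable_X: "integrable M (\<lambda>\<omega>. X \<omega> $ j)" for j
    by (rule square_integrable_imp_integrable[OF _ X_sq]) measurable
  obtain c d where residual: "\<And>b. AE \<omega> in M.
      real_cond_exp M (gen_sigma M (\<lambda>\<omega>. transpose B *v X \<omega>)) (\<lambda>\<omega>. c b + (b - B *v d b) \<bullet> X \<omega>) \<omega> = 0"
    using linear_design_residuals[OF \<open>prob_space M\<close> X_meas integrable_X LDC] by blast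
  note orthogonal = residual_direction_orthogonal_cond_var_cov[OF pair moments f_meas S_borel model residual]
  show ?thesis
    by (rule matrix_inv_mult_in_span_columns[OF V_S_inv transpose_cond_var_event
          moments_on_event.cond_var_event_nonneg[OF moments] B_rank
          span_range_diff_columns_eq_UNIV[of B d]])
      (use orthogonal in auto)
qed

end
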